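(* Let $k\ge 2$, let $H_0$ be a finite $k$-uniform hypergraph and let $(H_t)_{t\ge0}$ be the ILTH hypergraphs generated from $H_0$. For each $t$ let $A(t)$ be the set of 5-tuples $(u,e_1,v,e_2,w)$ with $u,v,w\in V(H_t)$ distinct, $e_1,e_2\in E(H_t)$ (not necessarily distinct), such that there is some $e_3\in E(H_t)$ with $u\in e_1\cap e_3$, $v\in e_1\cap e_2$ and $w\in e_2\cap e_3$. Then for all nonnegative integers $t$, $|A(t)|=(k^2)^t|A(0)|$.
   Context: A $k$-uniform hypergraph has every hyperedge a $k$-element subset of the vertex set. The ILTH process: given $H_t$, form $H_{t+1}$ by adding for each vertex $x\in V(H_t)$ a new vertex $x'$ (its clone), and taking $E(H_{t+1})=E(H_t)\cup\{(e\setminus\{x\})\cup\{x'\} : e\in E(H_t),\ x\in e\}$. *)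

theory Defs
  imports Main
begin

text \<open>Vertices of the ILTH hypergraphs: original vertices of H_0, and clones.
  The clone of x created in the step from H_t to H_{t+1} is Clone t x,
  which is guaranteed to be a fresh vertex.\<close>
datatype 'a vtx = Base 'a | Clone nat "'a vtx"

type_synonym 'v hgraph = "'v set \<times> 'v set set"

definition hypergraph :: "'v hgraph \<Rightarrow> bool" where
  "hypergraph H \<longleftrightarrow> (\<forall>e\<in>snd H. e \<subseteq> fst H)"

definition k_uniform :: "nat \<Rightarrow> 'v hgraph \<Rightarrow> bool" where
  "k_uniform k H \<longleftrightarrow> hypergraph H \<and> (\<forall>e\<in>snd H. card e = k)"

definition ilth_step :: "nat \<Rightarrow> 'a vtx hgraph \<Rightarrow> 'a vtx hgraph" where
  "ilth_step t H = (fst H \<union> Clone t ` fst H,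
     snd H \<union> {insert (Clone t x) (e - {x}) | e x. e \<in> snd H \<and> x \<in> e})"

fun ilth :: "'a hgraph \<Rightarrow> nat \<Rightarrow> 'a vtx hgraph" where
  "ilth H0 0 = (Base ` fst H0, (\<lambda>e. Base ` e) ` snd H0)"
| "ilth H0 (Suc t) = ilth_step t (ilth H0 t)"

definition tuples5 :: "'v hgraph \<Rightarrow> ('v \<times> 'v set \<times> 'v \<times> 'v set \<times> 'v) set" where
  "tuples5 H = {(u, e1, v, e2, w). u \<in> fst H \<and> v \<in> fst H \<and> w \<in> fst H \<and>
     u \<noteq> v \<and> v \<noteq> w \<and> u \<noteq> w \<and> e1 \<in> snd H \<and> e2 \<in> snd H \<and>
     (\<exists>e3\<in>snd H. u \<in> e1 \<and> u \<in> e3 \<and> v \<in> e1 \<and> v \<in> e2 \<and> w \<in> e2 \<and> w \<in> e3)}"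

end

theory Submission
  imports Defs
begin

text \<open>
  Every edge of H_{t+1} is an edge e of H_t, either unchanged or with exactly one vertex x
  replaced by its clone. So a tuple (u, e1, v, e2, w) of A(t) together with a choice of x in e1
  and y in e2 lifts to a tuple of A(t+1): x and y name the vertex cloned in e1 and e2 (choosing v
  means the edge is kept), and u resp. w is replaced by its clone when it is the chosen vertex.
  The combination x = u, y = w would put two clones into the third edge; it is used instead for
  the tuple in which v is cloned in both edges. Forgetting clones inverts this lifting, so A(t+1)
  is in bijection with the pairs of a tuple of A(t) and a point of e1 \<times> e2. This gives the factor
  k^2 at each step for every k.
\<close>

type_synonym 'v tuple5 = "'v \<times> 'v set \<times> 'v \<times> 'v set \<times> 'v"

definition unclone :: "nat \<Rightarrow> 'a vtx \<Rightarrow> 'a vtx" where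
  "unclone t y = (case y of Clone s x \<Rightarrow> if s = t then x else y | Base b \<Rightarrow> y)"

lemma unclone_Clone [simp]: "unclone t (Clone t x) = x"
  by (simp add: unclone_def)

definition clone_swap :: "nat \<Rightarrow> 'a vtx set \<Rightarrow> 'a vtx \<Rightarrow> 'a vtx set" where
  "clone_swap t e x = insert (Clone t x) (e - {x})"

locale ilth_fresh_step =
  fixes t :: nat and V :: "'a vtx set" and E :: "'a vtx set set" and k :: nat
  assumes Clone_fresh: "Clone t x \<notin> V"
    and edge_subset: "e \<in> E \<Longrightarrow> e \<subseteq> V"
    and card_edge: "e \<in> E \<Longrightarrow> card e = k"
    and finite_V: "finite V"
begin

definition V' :: "'a vtx set" where
  "V' = V \<union> Clone t ` V"

definition E' :: "'a vtx set set" where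
  "E' = E \<union> {clone_swap t e x | e x. e \<in> E \<and> x \<in> e}"

lemma ilth_step_eq: "ilth_step t (V, E) = (V', E')"
  by (simp add: ilth_step_def V'_def E'_def clone_swap_def)

lemma E'_cases:
  assumes "f \<in> E'"
  obtains "f \<in> E" | e z where "e \<in> E" "z \<in> e" "f = clone_swap t e z"
  using assms by (auto simp: E'_def)

lemma Clone_notin_edge: "e \<in> E \<Longrightarrow> Clone t x \<notin> e"
  using edge_subset Clone_fresh by blast

lemma unclone_vertex: "p \<in> V \<Longrightarrow> unclone t p = p"
  using Clone_fresh by (cases p) (auto simp: unclone_def)

lemma unclone_edge_vertex: "e \<in> E \<Longrightarrow> p \<in> e \<Longrightarrow> unclone t p = p"
  using edge_subset unclone_vertex by blast

lemma unclone_edge: "e \<in> E \<Longrightarrow> unclone t ` e = e"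
  by (simp add: unclone_edge_vertex)

lemma unclone_clone_swap:
  assumes "e \<in> E" "x \<in> e"
  shows "unclone t ` clone_swap t e x = e"
proof -
  have "unclone t ` (e - {x}) = e - {x}"
    using assms(1) unclone_edge_vertex by simp
  then show ?thesis
    using assms by (auto simp: clone_swap_def)
qed

lemma card_clone_swap:
  assumes "e \<in> E" "x \<in> e"
  shows "card (clone_swap t e x) = k"
proof -
  have "finite e"
    using assms edge_subset finite_V finite_subset by blast
  then have "Suc (card (e - {x})) = k"
    using assms card_edge card_Suc_Diff1 by metis
  then show ?thesis
    using \<open>finite e\<close> assms Clone_notin_edge by (simp add: clone_swap_def)
qed

lemma finite_V': "finite V'"
  using finite_V by (simp add: V'_def)

lemma k_uniform_step: "k_uniform k (V', E')"
  unfolding k_uniform_def hypergraph_def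
  using edge_subset card_edge card_clone_swap
  by (fastforce simp: E'_def V'_def clone_swap_def)

lemma unclone_E': "f \<in> E' \<Longrightarrow> unclone t ` f \<in> E"
  by (erule E'_cases) (simp_all add: unclone_edge unclone_clone_swap)

lemma inj_on_unclone_E': "f \<in> E' \<Longrightarrow> inj_on (unclone t) f"
  by (erule E'_cases) (auto simp: inj_on_def clone_swap_def unclone_edge_vertex)

lemma E'_at_most_one_Clone:
  "f \<in> E' \<Longrightarrow> p \<in> f \<Longrightarrow> q \<in> f \<Longrightarrow> p \<noteq> q \<Longrightarrow> p \<in> V \<or> q \<in> V"
  by (erule E'_cases) (auto simp: clone_swap_def dest!: edge_subset)

lemma E'_Clone_mem:
  assumes "f \<in> E'" "Clone t z \<in> f"
  shows "f = clone_swap t (unclone t ` f) z"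
  using assms(1)
proof (cases rule: E'_cases)
  case 1
  then show ?thesis using assms(2) Clone_notin_edge by blast
next
  case (2 e x)
  then have "z = x"
    using assms(2) Clone_notin_edge by (auto simp: clone_swap_def)
  then show ?thesis
    using 2 unclone_clone_swap by simp
qed

definition lift_vertex :: "'a vtx \<Rightarrow> 'a vtx \<Rightarrow> 'a vtx" where
  "lift_vertex x p = (if p = x then Clone t p else p)"

definition lift_edge :: "'a vtx \<Rightarrow> 'a vtx set \<Rightarrow> 'a vtx \<Rightarrow> 'a vtx set" where
  "lift_edge v e x = (if x = v then e else clone_swap t e x)"

fun lift_tuple :: "'a vtx tuple5 \<times> 'a vtx \<times> 'a vtx \<Rightarrow> 'a vtx tuple5" where
  "lift_tuple ((u, e1, v, e2, w), x, y) =
    (if x = u \<and> y = w then (u, clone_swap t e1 v, Clone t v, clone_swap t e2 v, w)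
     else (lift_vertex x u, lift_edge v e1 x, v, lift_edge v e2 y, lift_vertex y w))"

fun unclone_tuple :: "'a vtx tuple5 \<Rightarrow> 'a vtx tuple5" where
  "unclone_tuple (u, f1, v, f2, w) =
    (unclone t u, unclone t ` f1, unclone t v, unclone t ` f2, unclone t w)"

fun choices :: "'v tuple5 \<Rightarrow> ('v \<times> 'v) set" where
  "choices (u, e1, v, e2, w) = e1 \<times> e2"

lemma lift_edge_mem:
  assumes "e \<in> E" "u \<in> e" "v \<in> e" "u \<noteq> v" "x \<in> e"
  shows "lift_edge v e x \<in> E'" "lift_vertex x u \<in> lift_edge v e x" "v \<in> lift_edge v e x"
  using assms by (auto simp: lift_edge_def lift_vertex_def clone_swap_def E'_def)

lemma lift_tuple_mem:
  assumes "(u, e1, v, e2, w) \<in> tuples5 (V, E)" "x \<in> e1" "y \<in> e2"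
  shows "lift_tuple ((u, e1, v, e2, w), x, y) \<in> tuples5 (V', E')"
proof -
  obtain e3 where e3: "e3 \<in> E" "u \<in> e3" "w \<in> e3"
    and tuple: "u \<in> V" "v \<in> V" "w \<in> V" "u \<noteq> v" "v \<noteq> w" "u \<noteq> w" "e1 \<in> E" "e2 \<in> E"
      "u \<in> e1" "v \<in> e1" "v \<in> e2" "w \<in> e2"
    using assms(1) by (auto simp: tuples5_def)
  have Clone_ne: "Clone t p \<noteq> q" if "q \<in> V" for p q
    using Clone_fresh that by blast
  show ?thesis
  proof (cases "x = u \<and> y = w")
    case True
    have "e3 \<in> E'"
      using e3 by (simp add: E'_def)
    then show ?thesis
      using True tuple e3 Clone_ne
      by (auto simp: tuples5_def V'_def E'_def clone_swap_def)
  next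
    case False
    define e3' where
      "e3' = (if x = u then clone_swap t e3 u else if y = w then clone_swap t e3 w else e3)"
    have "e3' \<in> E'" "lift_vertex x u \<in> e3'" "lift_vertex y w \<in> e3'"
      using False e3 tuple by (auto simp: e3'_def E'_def lift_vertex_def clone_swap_def)
    moreover have "lift_vertex x u \<in> V'" "lift_vertex y w \<in> V'"
      using tuple by (auto simp: lift_vertex_def V'_def)
    moreover have "lift_vertex x u \<noteq> v" "lift_vertex y w \<noteq> v" "lift_vertex x u \<noteq> lift_vertex y w"
      using False tuple Clone_ne by (auto simp: lift_vertex_def)
    ultimately show ?thesis
      using False tuple assms(2,3) lift_edge_mem[of e1 u v x] lift_edge_mem[of e2 w v y]
      by (simp add: tuples5_def V'_def) blast
  qed
qed

lemma unclone_lift_edge: "e \<in> E \<Longrightarrow> x \<in> e \<Longrightarrow> unclone t ` lift_edge v e x = e"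
  by (simp add: lift_edge_def unclone_edge unclone_clone_swap)

lemma unclone_lift_vertex: "p \<in> V \<Longrightarrow> unclone t (lift_vertex x p) = p"
  by (simp add: lift_vertex_def unclone_vertex)

lemma unclone_lift_tuple:
  assumes "(u, e1, v, e2, w) \<in> tuples5 (V, E)" "x \<in> e1" "y \<in> e2"
  shows "unclone_tuple (lift_tuple ((u, e1, v, e2, w), x, y)) = (u, e1, v, e2, w)"
proof -
  have "u \<in> V" "v \<in> V" "w \<in> V" "e1 \<in> E" "e2 \<in> E" "v \<in> e1" "v \<in> e2"
    using assms(1) by (auto simp: tuples5_def)
  then show ?thesis
    using assms(2,3)
    by (simp add: unclone_lift_edge unclone_lift_vertex unclone_vertex unclone_clone_swap)
qed

lemma lift_edge_inj:
  assumes "e \<in> E" "x \<in> e" "x' \<in> e" "lift_edge v e x = lift_edge v e x'"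
  shows "x = x'"
proof -
  have Clone_mem: "Clone t z \<in> clone_swap t e z" for z
    by (simp add: clone_swap_def)
  have "Clone t z \<in> clone_swap t e z' \<Longrightarrow> z = z'" for z z'
    using assms(1) Clone_notin_edge by (auto simp: clone_swap_def)
  then show ?thesis
    using assms Clone_mem Clone_notin_edge unfolding lift_edge_def by (metis (full_types))
qed

lemma inj_on_lift_tuple: "inj_on lift_tuple (Sigma (tuples5 (V, E)) choices)"
proof (rule inj_onI)
  fix p q
  assume "p \<in> Sigma (tuples5 (V, E)) choices" and "q \<in> Sigma (tuples5 (V, E)) choices"
    and eq: "lift_tuple p = lift_tuple q"
  then obtain u e1 v e2 w x y u' e1' v' e2' w' x' y'
    where p_def: "p = ((u, e1, v, e2, w), x, y)" and q_def: "q = ((u', e1', v', e2', w'), x', y')"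
      and a: "(u, e1, v, e2, w) \<in> tuples5 (V, E)" and xy: "x \<in> e1" "y \<in> e2"
      and a': "(u', e1', v', e2', w') \<in> tuples5 (V, E)" and xy': "x' \<in> e1'" "y' \<in> e2'"
    by (cases p, cases q) auto
  have same: "u' = u" "e1' = e1" "v' = v" "e2' = e2" "w' = w"
    using arg_cong[OF eq, of unclone_tuple] unclone_lift_tuple[OF a xy] unclone_lift_tuple[OF a' xy']
    by (simp_all add: p_def q_def)
  have "e1 \<in> E" "e2 \<in> E" "Clone t v \<noteq> v"
    using a Clone_fresh by (auto simp: tuples5_def)
  then have "x = x' \<and> y = y'"
    using eq lift_edge_inj[of e1 x x' v] lift_edge_inj[of e2 y y' v] xy xy'
    by (auto simp: p_def q_def same split: if_splits)
  then show "p = q"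
    by (simp add: p_def q_def same)
qed

lemma unclone_tuple_mem:
  assumes "(u', f1, v', f2, w') \<in> tuples5 (V', E')"
  shows "unclone_tuple (u', f1, v', f2, w') \<in> tuples5 (V, E)"
proof -
  obtain f3 where f3: "f3 \<in> E'" "u' \<in> f3" "w' \<in> f3"
    and b: "u' \<noteq> v'" "v' \<noteq> w'" "u' \<noteq> w'" "f1 \<in> E'" "f2 \<in> E'"
      "u' \<in> f1" "v' \<in> f1" "v' \<in> f2" "w' \<in> f2"
    using assms by (auto simp: tuples5_def)
  have edge: "unclone t ` f \<in> E" "unclone t ` f \<subseteq> V" if "f \<in> E'" for f
    using that unclone_E' edge_subset by blast+
  have "unclone t p \<noteq> unclone t q" if "f \<in> E'" "p \<in> f" "q \<in> f" "p \<noteq> q" for f p q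
    using that inj_on_unclone_E' by (meson inj_on_contraD)
  from this[OF b(4,6,7,1)] this[OF b(5,8,9,2)] this[OF f3 b(3)] show ?thesis
    using f3 b edge by (auto simp: tuples5_def)
qed

lemma unlift_side:
  assumes "f \<in> E'" "p \<in> f" "v \<in> f" "v \<in> V" "p \<noteq> v"
  shows "\<exists>x \<in> unclone t ` f. p = lift_vertex x (unclone t p) \<and> f = lift_edge v (unclone t ` f) x"
  using assms(1)
proof (cases rule: E'_cases)
  case 1
  then show ?thesis
    using assms by (auto simp: lift_vertex_def lift_edge_def unclone_edge unclone_edge_vertex)
next
  case (2 e z)
  have "z \<noteq> v"
    using 2 assms(3,4) Clone_fresh by (auto simp: clone_swap_def)
  moreover have "p = lift_vertex z (unclone t p)"
    using 2 assms(2) by (auto simp: clone_swap_def lift_vertex_def unclone_edge_vertex)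
  ultimately show ?thesis
    using 2 unclone_clone_swap by (auto simp: lift_edge_def)
qed

lemma lift_tuple_surj:
  assumes "b \<in> tuples5 (V', E')"
  shows "b \<in> lift_tuple ` Sigma (tuples5 (V, E)) choices"
proof -
  obtain u' f1 v' f2 w' where b_def: "b = (u', f1, v', f2, w')"
    by (cases b)
  obtain f3 where f3: "f3 \<in> E'" "u' \<in> f3" "w' \<in> f3"
    and h: "v' \<in> V'" "u' \<noteq> v'" "v' \<noteq> w'" "u' \<noteq> w'" "f1 \<in> E'" "f2 \<in> E'"
      "u' \<in> f1" "v' \<in> f1" "v' \<in> f2" "w' \<in> f2"
    using assms by (auto simp: b_def tuples5_def)
  define a where "a = unclone_tuple b"
  have a_mem: "a \<in> tuples5 (V, E)"
    using unclone_tuple_mem assms by (simp add: a_def b_def)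
  show ?thesis
  proof (cases "v' \<in> V")
    case False
    then obtain v where v: "v' = Clone t v"
      using h(1) by (auto simp: V'_def)
    have "u' \<in> V" "w' \<in> V"
      using E'_at_most_one_Clone h False by metis+
    then have "lift_tuple (a, unclone t u', unclone t w') = b"
      using E'_Clone_mem[of f1 v, symmetric] E'_Clone_mem[of f2 v, symmetric] h v
      by (simp add: a_def b_def unclone_vertex)
    moreover have "(unclone t u', unclone t w') \<in> choices a"
      using h by (simp add: a_def b_def)
    ultimately show ?thesis
      using a_mem by (metis SigmaI rev_image_eqI)
  next
    case True
    obtain x where x: "x \<in> unclone t ` f1" "lift_vertex x (unclone t u') = u'"
        "lift_edge v' (unclone t ` f1) x = f1"
      using unlift_side[of f1 u' v'] h True by metis
    obtain y where y: "y \<in> unclone t ` f2" "lift_vertex y (unclone t w') = w'"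
        "lift_edge v' (unclone t ` f2) y = f2"
      using unlift_side[of f2 w' v'] h True by metis
    have "\<not> (x = unclone t u' \<and> y = unclone t w')"
    proof
      assume "x = unclone t u' \<and> y = unclone t w'"
      then have "u' \<notin> V" "w' \<notin> V"
        using x(2) y(2) Clone_fresh by (metis lift_vertex_def)+
      then show False
        using E'_at_most_one_Clone f3 h(4) by blast
    qed
    then have "lift_tuple (a, x, y) = b"
      using x y True by (simp add: a_def b_def unclone_vertex)
    moreover have "(x, y) \<in> choices a"
      using x(1) y(1) by (simp add: a_def b_def)
    ultimately show ?thesis
      using a_mem by (metis SigmaI rev_image_eqI)
  qed
qed

lemma bij_betw_lift_tuple:
  "bij_betw lift_tuple (Sigma (tuples5 (V, E)) choices) (tuples5 (V', E'))"
proof -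
  have "lift_tuple p \<in> tuples5 (V', E')" if "p \<in> Sigma (tuples5 (V, E)) choices" for p
    using that lift_tuple_mem by (cases p) auto
  then show ?thesis
    using inj_on_lift_tuple lift_tuple_surj by (auto simp: bij_betw_def)
qed

lemma finite_tuples5: "finite (tuples5 (V, E))"
proof (rule finite_subset)
  show "tuples5 (V, E) \<subseteq> V \<times> Pow V \<times> V \<times> Pow V \<times> V"
    using edge_subset by (auto simp: tuples5_def)
qed (simp add: finite_V)

lemma card_tuples5_step: "card (tuples5 (V', E')) = k^2 * card (tuples5 (V, E))"
proof -
  have choices: "finite (choices a) \<and> card (choices a) = k^2" if "a \<in> tuples5 (V, E)" for a
    using that edge_subset finite_V card_edge
    by (cases a) (auto simp: tuples5_def card_cartesian_product power2_eq_square
        intro: finite_subset)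
  have "card (tuples5 (V', E')) = card (Sigma (tuples5 (V, E)) choices)"
    using bij_betw_same_card[OF bij_betw_lift_tuple] by simp
  also have "\<dots> = (\<Sum>a\<in>tuples5 (V, E). card (choices a))"
    using finite_tuples5 choices by simp
  also have "\<dots> = (\<Sum>a\<in>tuples5 (V, E). k^2)"
    using choices by simp
  finally show ?thesis
    by simp
qed

end

lemma ilth_finite_uniform_fresh:
  assumes "finite (fst H0)" and "k_uniform k H0"
  shows "finite (fst (ilth H0 t)) \<and> k_uniform k (ilth H0 t) \<and>
    (\<forall>s x. t \<le> s \<longrightarrow> Clone s x \<notin> fst (ilth H0 t))"
proof (induction t)
  case 0
  have "card (Base ` e) = card e" for e :: "'a set"
    by (simp add: card_image inj_on_def)
  then show ?case
    using assms by (auto simp: k_uniform_def hypergraph_def)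
next
  case (Suc t)
  obtain V E where VE: "ilth H0 t = (V, E)"
    by (cases "ilth H0 t")
  interpret ilth_fresh_step t V E k
    using Suc VE by unfold_locales (auto simp: k_uniform_def hypergraph_def)
  have "ilth H0 (Suc t) = (V', E')"
    using VE ilth_step_eq by simp
  moreover have "Clone s x \<notin> V'" if "Suc t \<le> s" for s x
    using Suc VE that by (auto simp: V'_def)
  ultimately show ?case
    using finite_V' k_uniform_step by simp
qed

lemma card_tuples5_ilth_Suc:
  assumes "finite (fst H0)" and "k_uniform k H0"
  shows "card (tuples5 (ilth H0 (Suc t))) = k^2 * card (tuples5 (ilth H0 t))"
proof -
  obtain V E where VE: "ilth H0 t = (V, E)"
    by (cases "ilth H0 t")
  interpret ilth_fresh_step t V E k
    using ilth_finite_uniform_fresh[OF assms, of t] VE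
    by unfold_locales (auto simp: k_uniform_def hypergraph_def)
  show ?thesis
    using VE ilth_step_eq card_tuples5_step by simp
qed

theorem lemma4p7:
  fixes H0 :: "'a hgraph" and k :: nat
  assumes "k \<ge> 2" and "finite (fst H0)" and "k_uniform k H0"
  shows "\<forall>t. card (tuples5 (ilth H0 t)) = (k^2)^t * card (tuples5 (ilth H0 0))"
proof
  fix t
  show "card (tuples5 (ilth H0 t)) = (k^2)^t * card (tuples5 (ilth H0 0))"
    by (induction t) (simp_all add: card_tuples5_ilth_Suc[OF assms(2,3)] del: ilth.simps)
qed

end
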